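(* For any real continuous function $f\in C(\Omega)$, $$\|[\mathcal D,\pi(M_f)]\|=\Big|\sqrt{L|Kf-f|^2}\Big|_\infty=\sup_{x\in\Omega}\sqrt{\frac{|f(x)-f(0x)|^2}{2}+\frac{|f(x)-f(1x)|^2}{2}}.$$
   Context: $\Omega=\{0,1\}^{\mathbb N}$ with the shift $\sigma$; for $a\in\{0,1\}$, $ax=(a,x_1,x_2,\dots)$. $\mu$ is the measure of maximal entropy (uniform Bernoulli product measure), $L^2(\mu)$ the Hilbert space of square-integrable functions. $|\cdot|_\infty$ is the supremum norm. Ruelle operator $L\phi(x)=\frac12(\phi(0x)+\phi(1x))$; Koopman operator $K\phi=\phi\circ\sigma$. For $f\in C(\Omega)$, $M_f$ is multiplication $g\mapsto fg$ on $L^2(\mu)$. On $\mathcal H=L^2(\mu)\times L^2(\mu)$ (norm $|(\phi_1,\phi_2)|^2=|\phi_1|^2+|\phi_2|^2$), $\mathcal D=\begin{pmatrix}0&K\\ L&0\end{pmatrix}$ and $\pi(A)=\begin{pmatrix}A&0\\0&A\end{pmatrix}$; $[\mathcal D,\pi(A)]=\mathcal D\pi(A)-\pi(A)\mathcal D$. $\|\cdot\|$ is the operator norm. *)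

theory Defs
  imports "HOL-Probability.Probability"
begin

text \<open>Omega = {0,1}^N modelled as nat => bool; digit 0 is False, digit 1 is True;
  x_1 is x 0.\<close>
type_synonym omega = "nat \<Rightarrow> bool"

definition shift :: "omega \<Rightarrow> omega" where
  "shift x = (\<lambda>n. x (Suc n))"

definition cons_digit :: "bool \<Rightarrow> omega \<Rightarrow> omega" where
  "cons_digit a x = (\<lambda>n. case n of 0 \<Rightarrow> a | Suc m \<Rightarrow> x m)"

definition Omega_top :: "omega topology" where
  "Omega_top = product_topology (\<lambda>_. discrete_topology (UNIV :: bool set)) UNIV"

definition mu :: "omega measure" where
  "mu = (\<Pi>\<^sub>M n\<in>UNIV. measure_pmf (bernoulli_pmf (1/2)))"

definition L2 :: "(omega \<Rightarrow> real) set" where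
  "L2 = {\<phi>. \<phi> \<in> borel_measurable mu \<and> integrable mu (\<lambda>x. (\<phi> x)\<^sup>2)}"

definition L2_norm :: "(omega \<Rightarrow> real) \<Rightarrow> real" where
  "L2_norm \<phi> = sqrt (\<integral>x. (\<phi> x)\<^sup>2 \<partial>mu)"

definition Ruelle :: "(omega \<Rightarrow> real) \<Rightarrow> (omega \<Rightarrow> real)" where
  "Ruelle \<phi> = (\<lambda>x. (\<phi> (cons_digit False x) + \<phi> (cons_digit True x)) / 2)"

definition Koopman :: "(omega \<Rightarrow> real) \<Rightarrow> (omega \<Rightarrow> real)" where
  "Koopman \<phi> = \<phi> \<circ> shift"

definition mult_op :: "(omega \<Rightarrow> real) \<Rightarrow> (omega \<Rightarrow> real) \<Rightarrow> (omega \<Rightarrow> real)" where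
  "mult_op f g = (\<lambda>x. f x * g x)"

definition H :: "((omega \<Rightarrow> real) \<times> (omega \<Rightarrow> real)) set" where
  "H = L2 \<times> L2"

definition H_norm :: "(omega \<Rightarrow> real) \<times> (omega \<Rightarrow> real) \<Rightarrow> real" where
  "H_norm p = sqrt ((L2_norm (fst p))\<^sup>2 + (L2_norm (snd p))\<^sup>2)"

text \<open>D = [[0, K], [L, 0]] and pi(A) = diag(A, A).\<close>
definition Dirac :: "(omega \<Rightarrow> real) \<times> (omega \<Rightarrow> real) \<Rightarrow> (omega \<Rightarrow> real) \<times> (omega \<Rightarrow> real)" where
  "Dirac p = (Koopman (snd p), Ruelle (fst p))"

definition rep :: "((omega \<Rightarrow> real) \<Rightarrow> (omega \<Rightarrow> real))
    \<Rightarrow> (omega \<Rightarrow> real) \<times> (omega \<Rightarrow> real) \<Rightarrow> (omega \<Rightarrow> real) \<times> (omega \<Rightarrow> real)" where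
  "rep A p = (A (fst p), A (snd p))"

definition commutator ::
  "((omega \<Rightarrow> real) \<times> (omega \<Rightarrow> real) \<Rightarrow> (omega \<Rightarrow> real) \<times> (omega \<Rightarrow> real))
   \<Rightarrow> ((omega \<Rightarrow> real) \<times> (omega \<Rightarrow> real) \<Rightarrow> (omega \<Rightarrow> real) \<times> (omega \<Rightarrow> real))
   \<Rightarrow> (omega \<Rightarrow> real) \<times> (omega \<Rightarrow> real) \<Rightarrow> (omega \<Rightarrow> real) \<times> (omega \<Rightarrow> real)" where
  "commutator S T p = (let a = S (T p); b = T (S p) in (fst a - fst b, snd a - snd b))"

definition op_norm ::
  "((omega \<Rightarrow> real) \<times> (omega \<Rightarrow> real) \<Rightarrow> (omega \<Rightarrow> real) \<times> (omega \<Rightarrow> real)) \<Rightarrow> real" where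
  "op_norm T = Sup {H_norm (T p) | p. p \<in> H \<and> H_norm p \<le> 1}"

end

(*
  The commutator sends (p1, p2) to ((Kf - f) * K p2, L ((f - Kf) * p1)). Since mu is
  L-invariant, L is the adjoint of K, so the first component has squared norm
  int G * p2^2 with G = L |Kf - f|^2, while the Cauchy-Schwarz inequality for the
  averaging operator L bounds the squared norm of the second by (sup G) * int p1^2.
  Conversely, G is continuous and mu charges every nonempty open set, so normalised
  indicators p2 of the open sets {G > c} give unit vectors (0, p2) whose images have
  squared norm at least c.
*)

theory Submission
  imports Defs
begin

instance bool :: second_countable_topology
proof
  show "\<exists>B::bool set set. countable B \<and> open = generate_topology B"
    by (intro exI[of _ UNIV] conjI)
       (auto simp: fun_eq_iff discrete_topology_class.open_discrete intro: generate_topology.Basis)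
qed

lemma sets_mu: "sets mu = sets (borel :: omega measure)"
proof -
  have "sets mu = sets (Pi\<^sub>M UNIV (\<lambda>i::nat. borel :: bool measure))"
    unfolding mu_def by (intro sets_PiM_cong) (auto simp: sets_borel_eq_count_space)
  also have "\<dots> = sets borel" by (rule sets_PiM_equal_borel)
  finally show ?thesis .
qed

lemma space_mu [simp]: "space mu = UNIV"
  unfolding mu_def by (simp add: space_PiM)

lemma prob_space_mu: "prob_space mu"
  unfolding mu_def by (rule prob_space_PiM) (simp add: prob_space_measure_pmf)

lemma measurable_shift [measurable]: "shift \<in> measurable mu mu"
  unfolding shift_def mu_def by (rule measurable_PiM_single') (auto simp: space_PiM)

lemma measurable_cons_digit [measurable]: "cons_digit a \<in> measurable mu mu"
  unfolding cons_digit_def mu_def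
  by (rule measurable_PiM_single') (auto simp: space_PiM split: nat.split)

lemma borel_measurable_Koopman [measurable]:
  assumes [measurable]: "g \<in> borel_measurable mu"
  shows "Koopman g \<in> borel_measurable mu"
  unfolding Koopman_def by measurable

lemma borel_measurable_Ruelle [measurable]:
  assumes [measurable]: "g \<in> borel_measurable mu"
  shows "Ruelle g \<in> borel_measurable mu"
  unfolding Ruelle_def by measurable

lemma shift_cons_digit [simp]: "shift (cons_digit a x) = x"
  unfolding cons_digit_def shift_def by auto

lemma borel_measurable_continuous_on_mu:
  "continuous_on UNIV g \<Longrightarrow> (g :: omega \<Rightarrow> real) \<in> borel_measurable mu"
  by (subst measurable_cong_sets[OF sets_mu refl]) (rule borel_measurable_continuous_onI)

lemma nn_integral_Ruelle:
  assumes [measurable]: "g \<in> borel_measurable mu" and nonneg: "\<And>x. 0 \<le> g x"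
  shows "(\<integral>\<^sup>+x. ennreal (Ruelle g x) \<partial>mu) = (\<integral>\<^sup>+x. ennreal (g x) \<partial>mu)"
proof -
  let ?B = "measure_pmf (bernoulli_pmf (1/2))"
  interpret S: sequence_space ?B by unfold_locales (simp add: prob_space_measure_pmf)
  interpret P: pair_sigma_finite ?B S.S ..
  have [measurable]: "g \<in> borel_measurable S.S" using assms(1) unfolding mu_def .
  have cons_digit_eq: "cons_digit a = case_nat a" for a
    unfolding cons_digit_def by (auto split: nat.split)
  have "(\<integral>\<^sup>+x. ennreal (g x) \<partial>mu) = (\<integral>\<^sup>+y. ennreal (g ((\<lambda>(a, x). case_nat a x) y)) \<partial>(?B \<Otimes>\<^sub>M S.S))"
    unfolding mu_def by (subst S.PiM_iter[symmetric]) (simp add: nn_integral_distr)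
  also have "\<dots> = (\<integral>\<^sup>+a. \<integral>\<^sup>+x. ennreal (g ((\<lambda>(a, x). case_nat a x) (a, x))) \<partial>S.S \<partial>?B)"
    by (subst S.nn_integral_fst) simp_all
  also have "\<dots> = (\<integral>\<^sup>+a. \<integral>\<^sup>+x. ennreal (g (case_nat a x)) \<partial>S.S \<partial>?B)"
    by simp
  also have "\<dots> = (\<integral>\<^sup>+x. ennreal (g (case_nat False x)) \<partial>S.S) / 2
                 + (\<integral>\<^sup>+x. ennreal (g (case_nat True x)) \<partial>S.S) / 2"
    by (subst nn_integral_measure_pmf_finite) (auto simp: UNIV_bool divide_ennreal_def add.commute)
  also have "\<dots> = (\<integral>\<^sup>+x. (ennreal (g (cons_digit False x)) + ennreal (g (cons_digit True x))) / 2 \<partial>mu)"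
    unfolding cons_digit_eq mu_def
    by (simp add: nn_integral_add nn_integral_divide add_divide_distrib_ennreal)
  also have "\<dots> = (\<integral>\<^sup>+x. ennreal (Ruelle g x) \<partial>mu)"
    unfolding Ruelle_def using nonneg
    by (intro nn_integral_cong)
       (metis add_nonneg_nonneg divide_ennreal ennreal_numeral ennreal_plus zero_less_numeral)
  finally show ?thesis ..
qed

lemma Ruelle_nonneg: "(\<And>y. 0 \<le> g y) \<Longrightarrow> 0 \<le> Ruelle g x"
  unfolding Ruelle_def by simp

lemma Ruelle_mult_Koopman: "Ruelle (\<lambda>y. g y * Koopman h y) x = Ruelle g x * h x"
  unfolding Ruelle_def Koopman_def by (simp add: algebra_simps add_divide_distrib)

lemma nn_integral_mult_Koopman:
  assumes [measurable]: "g \<in> borel_measurable mu" "h \<in> borel_measurable mu"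
    and "\<And>x. 0 \<le> g x" "\<And>x. 0 \<le> h x"
  shows "(\<integral>\<^sup>+x. ennreal (g x * Koopman h x) \<partial>mu) = (\<integral>\<^sup>+x. ennreal (Ruelle g x * h x) \<partial>mu)"
proof -
  have "(\<integral>\<^sup>+x. ennreal (g x * Koopman h x) \<partial>mu) = (\<integral>\<^sup>+x. ennreal (Ruelle (\<lambda>y. g y * Koopman h y) x) \<partial>mu)"
    by (rule nn_integral_Ruelle[symmetric]) (measurable, simp add: assms Koopman_def)
  then show ?thesis by (simp only: Ruelle_mult_Koopman)
qed

lemma Ruelle_mult_sq_le:
  "(Ruelle (\<lambda>y. g y * h y) x)\<^sup>2 \<le> Ruelle (\<lambda>y. (g y)\<^sup>2) x * Ruelle (\<lambda>y. (h y)\<^sup>2) x"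
proof -
  have "((a * b + c * d) / 2)\<^sup>2 \<le> ((a\<^sup>2 + c\<^sup>2) / 2) * ((b\<^sup>2 + d\<^sup>2) / 2)" for a b c d :: real
  proof -
    have "((a\<^sup>2 + c\<^sup>2) / 2) * ((b\<^sup>2 + d\<^sup>2) / 2) - ((a * b + c * d) / 2)\<^sup>2 = ((a * d - c * b) / 2)\<^sup>2"
      by (simp add: power2_eq_square field_simps)
    then show ?thesis by (metis diff_ge_0_iff_ge zero_le_power2)
  qed
  then show ?thesis unfolding Ruelle_def .
qed

lemma L2_norm_sq: "(L2_norm u)\<^sup>2 = (\<integral>x. (u x)\<^sup>2 \<partial>mu)"
  unfolding L2_norm_def by simp

lemma H_norm_sq: "(H_norm p)\<^sup>2 = (\<integral>x. (fst p x)\<^sup>2 \<partial>mu) + (\<integral>x. (snd p x)\<^sup>2 \<partial>mu)"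
  unfolding H_norm_def by (simp add: L2_norm_sq[symmetric])

lemma H_norm_nonneg: "0 \<le> H_norm p"
  unfolding H_norm_def by simp

text \<open>No integrability is needed: otherwise both sides are \<open>0\<close>.\<close>
lemma integral_sq_eq_nn_integral:
  "u \<in> borel_measurable mu \<Longrightarrow> (\<integral>x. (u x)\<^sup>2 \<partial>mu) = enn2real (\<integral>\<^sup>+x. ennreal ((u x)\<^sup>2) \<partial>mu)"
  by (rule integral_eq_nn_integral) auto

lemma nn_integral_sq_L2:
  "p \<in> L2 \<Longrightarrow> (\<integral>\<^sup>+x. ennreal ((p x)\<^sup>2) \<partial>mu) = ennreal (\<integral>x. (p x)\<^sup>2 \<partial>mu)"
  unfolding L2_def by (intro nn_integral_eq_integral) auto

lemma integral_sq_mult_Koopman: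
  assumes [measurable]: "h \<in> borel_measurable mu" "p \<in> borel_measurable mu"
  shows "(\<integral>x. (h x * Koopman p x)\<^sup>2 \<partial>mu) = (\<integral>x. Ruelle (\<lambda>y. (h y)\<^sup>2) x * (p x)\<^sup>2 \<partial>mu)"
proof -
  have meas: "(\<lambda>x. h x * Koopman p x) \<in> borel_measurable mu" by measurable
  have "(\<integral>\<^sup>+x. ennreal ((h x * Koopman p x)\<^sup>2) \<partial>mu)
      = (\<integral>\<^sup>+x. ennreal ((h x)\<^sup>2 * Koopman (\<lambda>y. (p y)\<^sup>2) x) \<partial>mu)"
    by (simp add: Koopman_def power_mult_distrib)
  also have "\<dots> = (\<integral>\<^sup>+x. ennreal (Ruelle (\<lambda>y. (h y)\<^sup>2) x * (p x)\<^sup>2) \<partial>mu)"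
    by (rule nn_integral_mult_Koopman) auto
  finally show ?thesis
    using meas by (simp add: integral_sq_eq_nn_integral integral_eq_nn_integral Ruelle_nonneg)
qed

lemma integral_sq_Ruelle_mult_le:
  assumes [measurable]: "h \<in> borel_measurable mu" and p: "p \<in> L2"
    and bound: "\<And>x. Ruelle (\<lambda>y. (h y)\<^sup>2) x \<le> C"
  shows "(\<integral>x. (Ruelle (\<lambda>y. h y * p y) x)\<^sup>2 \<partial>mu) \<le> C * (\<integral>x. (p x)\<^sup>2 \<partial>mu)"
proof -
  have [measurable]: "p \<in> borel_measurable mu" using p unfolding L2_def by simp
  have C: "0 \<le> C" using bound Ruelle_nonneg by (meson order_trans zero_le_power2)
  have "(\<integral>\<^sup>+x. ennreal ((Ruelle (\<lambda>y. h y * p y) x)\<^sup>2) \<partial>mu)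
      \<le> (\<integral>\<^sup>+x. ennreal (C * Ruelle (\<lambda>y. (p y)\<^sup>2) x) \<partial>mu)"
    by (intro nn_integral_mono ennreal_leI order_trans[OF Ruelle_mult_sq_le]
        mult_right_mono bound Ruelle_nonneg) simp
  also have "\<dots> = ennreal C * (\<integral>\<^sup>+x. ennreal (Ruelle (\<lambda>y. (p y)\<^sup>2) x) \<partial>mu)"
    using C by (simp add: ennreal_mult Ruelle_nonneg nn_integral_cmult)
  also have "\<dots> = ennreal (C * (\<integral>x. (p x)\<^sup>2 \<partial>mu))"
    using p C by (simp add: nn_integral_Ruelle nn_integral_sq_L2 ennreal_mult)
  finally have "enn2real (\<integral>\<^sup>+x. ennreal ((Ruelle (\<lambda>y. h y * p y) x)\<^sup>2) \<partial>mu)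
      \<le> C * (\<integral>x. (p x)\<^sup>2 \<partial>mu)"
    using C by (simp add: enn2real_leI)
  then show ?thesis by (simp add: integral_sq_eq_nn_integral)
qed

lemma integrable_mult_sq_L2:
  assumes [measurable]: "g \<in> borel_measurable mu" and bound: "\<And>x. \<bar>g x\<bar> \<le> C" and p: "p \<in> L2"
  shows "integrable mu (\<lambda>x. g x * (p x)\<^sup>2)"
proof -
  have [measurable]: "p \<in> borel_measurable mu" using p unfolding L2_def by simp
  have "integrable mu (\<lambda>x. C * (p x)\<^sup>2)" using p unfolding L2_def by simp
  moreover have "(\<lambda>x. g x * (p x)\<^sup>2) \<in> borel_measurable mu" by measurable
  moreover have "AE x in mu. norm (g x * (p x)\<^sup>2) \<le> norm (C * (p x)\<^sup>2)"
    using bound by (intro AE_I2) (simp add: abs_mult mult_right_mono order_trans[OF _ abs_ge_self])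
  ultimately show ?thesis by (rule Bochner_Integration.integrable_bound)
qed

lemma integral_mult_sq_le:
  assumes "g \<in> borel_measurable mu" "\<And>x. \<bar>g x\<bar> \<le> C" and p: "p \<in> L2"
  shows "(\<integral>x. g x * (p x)\<^sup>2 \<partial>mu) \<le> C * (\<integral>x. (p x)\<^sup>2 \<partial>mu)"
proof -
  have "(\<integral>x. g x * (p x)\<^sup>2 \<partial>mu) \<le> (\<integral>x. C * (p x)\<^sup>2 \<partial>mu)"
  proof (rule integral_mono)
    show "integrable mu (\<lambda>x. g x * (p x)\<^sup>2)" using assms by (rule integrable_mult_sq_L2)
    show "integrable mu (\<lambda>x. C * (p x)\<^sup>2)" using p unfolding L2_def by simp
    show "g x * (p x)\<^sup>2 \<le> C * (p x)\<^sup>2" for x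
      using assms(2)[of x] by (simp add: mult_right_mono)
  qed
  then show ?thesis by simp
qed

lemma integral_mult_sq_ge:
  assumes "g \<in> borel_measurable mu" "\<And>x. \<bar>g x\<bar> \<le> C" and p: "p \<in> L2"
    and support: "\<And>x. p x \<noteq> 0 \<Longrightarrow> c \<le> g x"
  shows "c * (\<integral>x. (p x)\<^sup>2 \<partial>mu) \<le> (\<integral>x. g x * (p x)\<^sup>2 \<partial>mu)"
proof -
  have "(\<integral>x. c * (p x)\<^sup>2 \<partial>mu) \<le> (\<integral>x. g x * (p x)\<^sup>2 \<partial>mu)"
  proof (rule integral_mono)
    show "integrable mu (\<lambda>x. c * (p x)\<^sup>2)" using p unfolding L2_def by simp
    show "integrable mu (\<lambda>x. g x * (p x)\<^sup>2)" using assms(1-3) by (rule integrable_mult_sq_L2)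
    show "c * (p x)\<^sup>2 \<le> g x * (p x)\<^sup>2" for x
      using support[of x] by (cases "p x = 0") (simp_all add: mult_right_mono)
  qed
  then show ?thesis by simp
qed

lemma commutator_Dirac_mult_op:
  "commutator Dirac (rep (mult_op f)) p =
    (\<lambda>x. (Koopman f x - f x) * Koopman (snd p) x, Ruelle (\<lambda>y. (f y - Koopman f y) * fst p y))"
  unfolding commutator_def Dirac_def rep_def mult_op_def Koopman_def Ruelle_def
  by (simp add: fun_eq_iff algebra_simps add_divide_distrib diff_divide_distrib)

lemma H_norm_commutator_le:
  assumes [measurable]: "f \<in> borel_measurable mu" and p: "p \<in> H" and B: "0 \<le> B"
    and bound: "\<And>x. Ruelle (\<lambda>y. (Koopman f y - f y)\<^sup>2) x \<le> B\<^sup>2"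
  shows "H_norm (commutator Dirac (rep (mult_op f)) p) \<le> B * H_norm p"
proof -
  obtain p1 p2 where p_eq: "p = (p1, p2)" and p1: "p1 \<in> L2" and p2: "p2 \<in> L2"
    using p unfolding H_def by auto
  have [measurable]: "p2 \<in> borel_measurable mu" using p2 unfolding L2_def by simp
  have "(H_norm (commutator Dirac (rep (mult_op f)) p))\<^sup>2
      = (\<integral>x. (Ruelle (\<lambda>y. (f y - Koopman f y) * p1 y) x)\<^sup>2 \<partial>mu)
        + (\<integral>x. Ruelle (\<lambda>y. (Koopman f y - f y)\<^sup>2) x * (p2 x)\<^sup>2 \<partial>mu)"
    by (simp add: H_norm_sq commutator_Dirac_mult_op p_eq integral_sq_mult_Koopman)
  also have "\<dots> \<le> B\<^sup>2 * (\<integral>x. (p1 x)\<^sup>2 \<partial>mu) + B\<^sup>2 * (\<integral>x. (p2 x)\<^sup>2 \<partial>mu)"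
  proof (rule add_mono)
    show "(\<integral>x. (Ruelle (\<lambda>y. (f y - Koopman f y) * p1 y) x)\<^sup>2 \<partial>mu) \<le> B\<^sup>2 * (\<integral>x. (p1 x)\<^sup>2 \<partial>mu)"
      using bound by (intro integral_sq_Ruelle_mult_le p1) (simp_all add: power2_commute)
    show "(\<integral>x. Ruelle (\<lambda>y. (Koopman f y - f y)\<^sup>2) x * (p2 x)\<^sup>2 \<partial>mu) \<le> B\<^sup>2 * (\<integral>x. (p2 x)\<^sup>2 \<partial>mu)"
      using bound by (intro integral_mult_sq_le p2) (simp_all add: Ruelle_nonneg)
  qed
  also have "\<dots> = (B * H_norm p)\<^sup>2"
    by (simp add: H_norm_sq p_eq power_mult_distrib algebra_simps)
  finally show ?thesis
    using B H_norm_nonneg by (rule power2_le_imp_le[OF _ mult_nonneg_nonneg])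
qed

lemma H_norm_commutator_snd_sq:
  assumes [measurable]: "f \<in> borel_measurable mu" "p \<in> borel_measurable mu"
  shows "(H_norm (commutator Dirac (rep (mult_op f)) ((\<lambda>_. 0), p)))\<^sup>2
           = (\<integral>x. Ruelle (\<lambda>y. (Koopman f y - f y)\<^sup>2) x * (p x)\<^sup>2 \<partial>mu)"
  by (simp add: H_norm_sq commutator_Dirac_mult_op integral_sq_mult_Koopman) (simp add: Ruelle_def)

lemma Omega_top_eq_euclidean: "Omega_top = euclidean"
proof -
  have "discrete_topology (UNIV :: bool set) = euclidean"
    by (auto simp: topology_eq discrete_topology_class.open_discrete)
  then show ?thesis unfolding Omega_top_def using euclidean_product_topology by metis
qed

lemma compact_UNIV_omega: "compact (UNIV :: omega set)"
proof -
  have "compact_space Omega_top"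
    unfolding Omega_top_def
    by (simp add: compact_space_product_topology compact_space_discrete_topology)
  then show ?thesis by (simp add: Omega_top_eq_euclidean compact_space_def)
qed

lemma continuous_on_Koopman: "continuous_on UNIV g \<Longrightarrow> continuous_on UNIV (Koopman g)"
proof -
  assume g: "continuous_on UNIV g"
  have "continuous_on UNIV shift"
    unfolding shift_def
    by (intro continuous_on_coordinatewise_then_product continuous_on_product_coordinates)
  then show ?thesis
    unfolding Koopman_def by (rule continuous_on_compose[OF _ continuous_on_subset[OF g]]) auto
qed

lemma continuous_on_Ruelle: "continuous_on UNIV g \<Longrightarrow> continuous_on UNIV (Ruelle g)"
proof -
  assume g: "continuous_on UNIV g"
  have "continuous_on UNIV (cons_digit a)" for a
  proof (rule continuous_on_coordinatewise_then_product)
    show "continuous_on UNIV (\<lambda>x. cons_digit a x i)" for i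
      unfolding cons_digit_def by (cases i) (auto intro: continuous_on_product_coordinates)
  qed
  then have "continuous_on UNIV (\<lambda>x. g (cons_digit a x))" for a
    by (rule continuous_on_compose2[OF g]) auto
  then show ?thesis unfolding Ruelle_def[abs_def] by (intro continuous_intros) auto
qed

lemma open_contains_cylinder:
  assumes "open (U :: omega set)" "x0 \<in> U"
  obtains n where "{x. \<forall>i<n. x i = x0 i} \<subseteq> U"
proof -
  have U: "openin (product_topology (\<lambda>i. euclidean) UNIV) U"
    using assms(1) unfolding open_fun_def .
  obtain X where X: "x0 \<in> Pi\<^sub>E UNIV X" "finite {i. X i \<noteq> topspace euclidean}" "Pi\<^sub>E UNIV X \<subseteq> U"
    using product_topology_open_contains_basis[OF U assms(2)] by (elim exE conjE)
  obtain n where n: "{i. X i \<noteq> UNIV} \<subseteq> {..<n}"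
    using finite_nat_bounded X(2) by (metis topspace_euclidean)
  have "{x. \<forall>i<n. x i = x0 i} \<subseteq> Pi\<^sub>E UNIV X"
    using X(1) n by (force simp: PiE_iff)
  with X(3) show ?thesis by (intro that) blast
qed

lemma emeasure_mu_cylinder: "emeasure mu {x. \<forall>i<n. x i = x0 i} = ennreal ((1/2)^n)"
proof -
  let ?B = "measure_pmf (bernoulli_pmf (1/2))"
  interpret product_prob_space "\<lambda>_. ?B" UNIV
    by unfold_locales (simp add: prob_space_measure_pmf)
  have "{x. \<forall>i<n. x i = x0 i} = {x\<in>space mu. \<forall>i\<in>{..<n}. x i \<in> {x0 i}}" by auto
  also have "emeasure mu \<dots> = (\<Prod>i\<in>{..<n}. emeasure ?B {x0 i})"
    unfolding mu_def by (rule emeasure_PiM_Collect) auto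
  also have "\<dots> = (\<Prod>i\<in>{..<n}. ennreal (1/2))"
    by (intro prod.cong refl) (simp only: emeasure_pmf_single pmf_bernoulli_half)
  also have "\<dots> = ennreal ((1/2)^n)"
    by (simp only: prod_constant card_lessThan ennreal_power)
  finally show ?thesis .
qed

lemma measure_mu_open_pos:
  assumes "open U" "x0 \<in> U"
  shows "0 < measure mu U"
proof -
  interpret prob_space mu by (rule prob_space_mu)
  obtain n where n: "{x. \<forall>i<n. x i = x0 i} \<subseteq> U"
    using open_contains_cylinder[OF assms] .
  have "U \<in> sets mu" using assms(1) by (simp add: sets_mu)
  then have "measure mu {x. \<forall>i<n. x i = x0 i} \<le> measure mu U"
    using n by (intro finite_measure_mono)
  moreover have "measure mu {x. \<forall>i<n. x i = x0 i} = (1/2)^n"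
    by (simp add: measure_def emeasure_mu_cylinder)
  ultimately show ?thesis
    by (metis order_less_le_trans zero_less_divide_1_iff zero_less_numeral zero_less_power)
qed

lemma exists_L2_unit_supported:
  assumes "open U" "x0 \<in> U"
  obtains p where "p \<in> L2" "(\<integral>x. (p x)\<^sup>2 \<partial>mu) = 1" "\<And>x. p x \<noteq> 0 \<Longrightarrow> x \<in> U"
proof
  interpret prob_space mu by (rule prob_space_mu)
  define m where "m = measure mu U"
  have m: "0 < m" unfolding m_def using measure_mu_open_pos[OF assms] .
  have [measurable]: "U \<in> sets mu" using assms(1) by (simp add: sets_mu)
  define p where "p x = indicator U x / sqrt m" for x
  have p_sq: "(p x)\<^sup>2 = indicator U x / m" for x
    using m by (simp add: p_def power_divide indicator_def)
  have "p \<in> borel_measurable mu" unfolding p_def by measurable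
  moreover have "integrable mu (\<lambda>x. (p x)\<^sup>2)"
    unfolding p_sq by (intro integrable_divide integrable_real_indicator) (simp_all add: less_top[symmetric])
  ultimately show "p \<in> L2" unfolding L2_def by simp
  show "(\<integral>x. (p x)\<^sup>2 \<partial>mu) = 1"
    unfolding p_sq using m by (simp add: m_def)
  show "x \<in> U" if "p x \<noteq> 0" for x
    using that by (simp add: p_def indicator_def split: if_splits)
qed

lemma zero_in_H: "((\<lambda>_. 0), (\<lambda>_. 0)) \<in> H"
  by (simp add: H_def L2_def)

lemma H_norm_zero: "H_norm ((\<lambda>_. 0), (\<lambda>_. 0)) = 0"
  by (simp add: H_norm_def L2_norm_def)

lemma op_norm_le:
  assumes "0 \<le> B" and bound: "\<And>p. p \<in> H \<Longrightarrow> H_norm (T p) \<le> B * H_norm p"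
  shows "op_norm T \<le> B"
  unfolding op_norm_def
proof (rule cSup_least)
  show "{H_norm (T p) |p. p \<in> H \<and> H_norm p \<le> 1} \<noteq> {}"
    using zero_in_H H_norm_zero by fastforce
  show "x \<le> B" if "x \<in> {H_norm (T p) |p. p \<in> H \<and> H_norm p \<le> 1}" for x
    using that assms by (force intro: order_trans[OF bound] mult_left_le)
qed

lemma H_norm_le_op_norm:
  assumes "0 \<le> B" and bound: "\<And>p. p \<in> H \<Longrightarrow> H_norm (T p) \<le> B * H_norm p"
    and "p \<in> H" "H_norm p \<le> 1"
  shows "H_norm (T p) \<le> op_norm T"
  unfolding op_norm_def
proof (rule cSup_upper)
  show "H_norm (T p) \<in> {H_norm (T p) |p. p \<in> H \<and> H_norm p \<le> 1}"
    using assms by blast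
  show "bdd_above {H_norm (T p) |p. p \<in> H \<and> H_norm p \<le> 1}"
    using assms by (force intro!: bdd_aboveI[where M = B] order_trans[OF bound] mult_left_le)
qed

lemma sqrt_Ruelle_le_op_norm_commutator:
  assumes f: "continuous_on UNIV f" and B: "0 \<le> B"
    and bound: "\<And>x. Ruelle (\<lambda>y. (Koopman f y - f y)\<^sup>2) x \<le> B\<^sup>2"
  shows "sqrt (Ruelle (\<lambda>y. (Koopman f y - f y)\<^sup>2) x0) \<le> op_norm (commutator Dirac (rep (mult_op f)))"
proof -
  define G where "G = Ruelle (\<lambda>y. (Koopman f y - f y)\<^sup>2)"
  define T where "T = commutator Dirac (rep (mult_op f))"
  have f_meas [measurable]: "f \<in> borel_measurable mu"
    using f by (rule borel_measurable_continuous_on_mu)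
  have G_meas: "G \<in> borel_measurable mu" unfolding G_def by measurable
  have G_abs_le: "\<bar>G x\<bar> \<le> B\<^sup>2" for x
    using bound by (simp add: G_def Ruelle_nonneg)
  have T_bound: "H_norm (T p) \<le> B * H_norm p" if "p \<in> H" for p
    unfolding T_def using f_meas that B bound by (rule H_norm_commutator_le)
  have T_le: "H_norm (T p) \<le> op_norm T" if "p \<in> H" "H_norm p \<le> 1" for p
    using B T_bound that by (rule H_norm_le_op_norm)
  have "G x0 \<le> (op_norm T)\<^sup>2"
  proof (rule dense_le)
    fix c assume "c < G x0"
    then have x0: "x0 \<in> {x. c < G x}" by simp
    have "open {x. c < G x}"
      unfolding G_def using f
      by (intro open_Collect_less continuous_on_Ruelle continuous_on_Koopman continuous_intros)
    then obtain p where p: "p \<in> L2" "(\<integral>x. (p x)\<^sup>2 \<partial>mu) = 1"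
      and supp: "\<And>x. p x \<noteq> 0 \<Longrightarrow> x \<in> {x. c < G x}"
      using x0 by (rule exists_L2_unit_supported) blast
    have [measurable]: "p \<in> borel_measurable mu" using p(1) unfolding L2_def by simp
    have "c = c * (\<integral>x. (p x)\<^sup>2 \<partial>mu)" using p(2) by simp
    also have "\<dots> \<le> (\<integral>x. G x * (p x)\<^sup>2 \<partial>mu)"
      using G_meas G_abs_le p(1) by (rule integral_mult_sq_ge) (use supp in force)
    also have "\<dots> = (H_norm (T ((\<lambda>_. 0), p)))\<^sup>2"
      unfolding T_def G_def by (simp add: H_norm_commutator_snd_sq)
    also have "\<dots> \<le> (op_norm T)\<^sup>2"
      using p zero_in_H by (intro power_mono T_le H_norm_nonneg) (simp_all add: H_def H_norm_def L2_norm_def)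
    finally show "c \<le> (op_norm T)\<^sup>2" .
  qed
  moreover have "0 \<le> op_norm T"
    using T_le[OF zero_in_H] H_norm_zero H_norm_nonneg by (metis order_trans zero_le_one)
  ultimately show ?thesis
    using real_sqrt_le_mono unfolding G_def T_def by fastforce
qed

lemma op_norm_commutator_mult_op:
  assumes f: "continuous_on UNIV f"
  shows "op_norm (commutator Dirac (rep (mult_op f)))
           = (SUP x. sqrt (Ruelle (\<lambda>y. (Koopman f y - f y)\<^sup>2) x))"
    (is "_ = (SUP x. sqrt (?G x))")
proof -
  have "continuous_on UNIV (\<lambda>x. sqrt (?G x))"
    using f by (intro continuous_on_Ruelle continuous_on_Koopman continuous_intros)
  then have "bounded (range (\<lambda>x. sqrt (?G x)))"
    using compact_UNIV_omega compact_continuous_image compact_imp_bounded by blast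
  then have sqrt_le: "sqrt (?G x) \<le> (SUP x. sqrt (?G x))" for x
    by (intro cSUP_upper bounded_imp_bdd_above) simp_all
  then have B: "0 \<le> (SUP x. sqrt (?G x))"
    by (meson order_trans real_sqrt_ge_zero Ruelle_nonneg zero_le_power2)
  have G_le: "?G x \<le> (SUP x. sqrt (?G x))\<^sup>2" for x
    using sqrt_le by (rule sqrt_le_D)
  have f_meas: "f \<in> borel_measurable mu"
    using f by (rule borel_measurable_continuous_on_mu)
  show ?thesis
  proof (rule antisym)
    show "op_norm (commutator Dirac (rep (mult_op f))) \<le> (SUP x. sqrt (?G x))"
      using B H_norm_commutator_le[OF f_meas _ B G_le] by (rule op_norm_le)
    show "(SUP x. sqrt (?G x)) \<le> op_norm (commutator Dirac (rep (mult_op f)))"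
      using sqrt_Ruelle_le_op_norm_commutator[OF f B G_le] by (rule cSUP_least[rotated]) simp
  qed
qed

theorem proposition2p11:
  fixes f :: "omega \<Rightarrow> real"
  assumes "continuous_map Omega_top euclideanreal f"
  shows "op_norm (commutator Dirac (rep (mult_op f)))
           = (SUP x. \<bar>sqrt (Ruelle (\<lambda>y. \<bar>Koopman f y - f y\<bar>\<^sup>2) x)\<bar>)
       \<and> (SUP x. \<bar>sqrt (Ruelle (\<lambda>y. \<bar>Koopman f y - f y\<bar>\<^sup>2) x)\<bar>)
           = (SUP x. sqrt (\<bar>f x - f (cons_digit False x)\<bar>\<^sup>2 / 2
                          + \<bar>f x - f (cons_digit True x)\<bar>\<^sup>2 / 2))"
proof -
  have "continuous_on UNIV f"
    using assms by (simp add: Omega_top_eq_euclidean continuous_map_iff_continuous2)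
  moreover have "\<bar>sqrt (Ruelle (\<lambda>y. \<bar>Koopman f y - f y\<bar>\<^sup>2) x)\<bar>
      = sqrt (Ruelle (\<lambda>y. (Koopman f y - f y)\<^sup>2) x)" for x
    by (simp add: Ruelle_nonneg)
  moreover have "sqrt (\<bar>f x - f (cons_digit False x)\<bar>\<^sup>2 / 2 + \<bar>f x - f (cons_digit True x)\<bar>\<^sup>2 / 2)
      = sqrt (Ruelle (\<lambda>y. (Koopman f y - f y)\<^sup>2) x)" for x
    by (simp add: Ruelle_def Koopman_def add_divide_distrib power2_commute)
  ultimately show ?thesis
    by (simp add: op_norm_commutator_mult_op)
qed

end
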